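(* Let $N\in\mathbb{N}$, let $(X_i,d_{X_i})$ be Polish spaces, $X=\prod_{i=1}^N X_i$, let $p\in[1,\infty]$, $\mu_i\in\mathcal{P}_p(X_i)$, $\boldsymbol\mu=(\mu_1,\dots,\mu_N)$, $P=\mu_1\otimes\cdots\otimes\mu_N$, and let $c:X\to\mathbb{R}$ be continuous with growth of order $p$ (bounded if $p=\infty$). Let $(\varphi,\psi)$ be convex conjugates and assume $\varphi$ is $(\lambda_1,\lambda_2)$-convex for some $\lambda_1,\lambda_2\ge 0$. Let $\pi^*$ be an optimizer of $\mathsf{OT}_\varphi(\boldsymbol\mu)$ and let $\pi\in\Pi(\boldsymbol\mu)$. Then for any measurable $\rho:X\to\mathbb{R}_+$, \[ \|\rho(\pi^*-\pi)\|_{TV}^2\le C\left(\int|\rho|^2\,d(P+\pi^*+\pi)\right)\left(\mathcal{F}^{\boldsymbol\mu}_\varphi(\pi)-\mathcal{F}^{\boldsymbol\mu}_\varphi(\pi^* )\right), \] where $C=4\max\{\lambda_1,\lambda_2\}$.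
   Context: $(\varphi,\psi)$ convex conjugates: $\varphi:\mathbb{R}_+\to\mathbb{R}$ strictly convex, bounded below, $\varphi(1)=0$, $\varphi(x)/x\to\infty$ as $x\to\infty$, and $\psi(y)=\sup_{x\ge0}(xy-\varphi(x))$. $\varphi$ is $(\lambda_1,\lambda_2)$-convex if $\varphi\in C^2(\mathbb{R}_+)$ and $1/\varphi''(x)\le\lambda_1+\lambda_2 x$ for all $x\in(0,\infty)$. The $\varphi$-divergence is $D_\varphi(Q,P)=\int\varphi(dQ/dP)\,dP$ if $Q\ll P$ and $+\infty$ otherwise. $\Pi(\boldsymbol\mu)$ is the set of probability measures on $X$ with $i$-th marginal $\mu_i$. $\mathcal{F}^{\boldsymbol\mu}_\varphi(\pi)=\int c\,d\pi+D_\varphi(\pi,P)$ and $\mathsf{OT}_\varphi(\boldsymbol\mu)=\inf_{\pi\in\Pi(\boldsymbol\mu)}\mathcal{F}^{\boldsymbol\mu}_\varphi(\pi)$. Growth of order $p<\infty$ means $|c(x)|\le C'(1+d_X(x_0,x)^p)$ for some $x_0\in X$, $C'>0$. $\|\cdot\|_{TV}$ is the total variation norm of signed measures (total mass of the variation, so probability measures have norm one), and $\rho(\pi^*-\pi)$ denotes the signed measure $\rho\pi^*-\rho\pi$, where $\rho\pi$ has density $\rho$ with respect to $\pi$. *)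

theory Defs
  imports "HOL-Probability.Probability"
begin

definition borel_of :: "'a topology \<Rightarrow> 'a measure" where
  "borel_of T = sigma (topspace T) {U. openin T U}"

definition polish_metric :: "'a set \<Rightarrow> ('a \<Rightarrow> 'a \<Rightarrow> real) \<Rightarrow> bool" where
  "polish_metric S d \<longleftrightarrow> Metric_space S d \<and> Metric_space.mcomplete S d
      \<and> separable_space (Metric_space.mtopology S d)"

(* mu is in P_p(S,d), p \<in> [1,\<infinity>]; P_\<infinity> = probability measures with bounded support *)
definition in_Pp :: "ennreal \<Rightarrow> 'a set \<Rightarrow> ('a \<Rightarrow> 'a \<Rightarrow> real) \<Rightarrow> 'a measure \<Rightarrow> bool" where
  "in_Pp p S d mu \<longleftrightarrow> prob_space mu \<and> sets mu = sets (borel_of (Metric_space.mtopology S d))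
     \<and> space mu = S
     \<and> (if p = \<top> then (\<exists>x0\<in>S. \<exists>R. AE x in mu. d x0 x \<le> R)
        else (\<exists>x0\<in>S. integrable mu (\<lambda>x. d x0 x powr enn2real p)))"

definition prod_dist :: "nat \<Rightarrow> (nat \<Rightarrow> 'a \<Rightarrow> 'a \<Rightarrow> real) \<Rightarrow> (nat \<Rightarrow> 'a) \<Rightarrow> (nat \<Rightarrow> 'a) \<Rightarrow> real" where
  "prod_dist N d x y = (\<Sum>i<N. d i (x i) (y i))"

definition growth_order :: "ennreal \<Rightarrow> nat \<Rightarrow> (nat \<Rightarrow> 'a set) \<Rightarrow> (nat \<Rightarrow> 'a \<Rightarrow> 'a \<Rightarrow> real)
     \<Rightarrow> ((nat \<Rightarrow> 'a) \<Rightarrow> real) \<Rightarrow> bool" where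
  "growth_order p N S d c \<longleftrightarrow>
     (if p = \<top> then (\<exists>B. \<forall>x\<in>PiE {..<N} S. \<bar>c x\<bar> \<le> B)
      else (\<exists>x0\<in>PiE {..<N} S. \<exists>C'>0. \<forall>x\<in>PiE {..<N} S.
              \<bar>c x\<bar> \<le> C' * (1 + prod_dist N d x0 x powr enn2real p)))"

definition admissible_phi :: "(real \<Rightarrow> real) \<Rightarrow> bool" where
  "admissible_phi \<phi> \<longleftrightarrow>
     (\<forall>x\<ge>0. \<forall>y\<ge>0. \<forall>t. x \<noteq> y \<and> 0 < t \<and> t < 1 \<longrightarrow>
        \<phi> ((1 - t) * x + t * y) < (1 - t) * \<phi> x + t * \<phi> y)
   \<and> (\<exists>b. \<forall>x\<ge>0. b \<le> \<phi> x)
   \<and> \<phi> 1 = 0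
   \<and> filterlim (\<lambda>x. \<phi> x / x) at_top at_top"

(* (lambda1,lambda2)-convexity: phi is C^2 on (0,\<infinity>) (and continuous on [0,\<infinity>)),
   and 1/phi'' <= lambda1 + lambda2 x, where 1/0 is read as +\<infinity> (so phi'' > 0) *)
definition lambda_convex :: "real \<Rightarrow> real \<Rightarrow> (real \<Rightarrow> real) \<Rightarrow> bool" where
  "lambda_convex l1 l2 \<phi> \<longleftrightarrow>
     continuous_on {0..} \<phi>
   \<and> (\<forall>x>0. \<phi> differentiable (at x) \<and> deriv \<phi> differentiable (at x))
   \<and> continuous_on {0<..} (deriv (deriv \<phi>))
   \<and> (\<forall>x>0. deriv (deriv \<phi>) x > 0 \<and> 1 / deriv (deriv \<phi>) x \<le> l1 + l2 * x)"

(* phi-divergence D_phi(Q,P) (for finite P; phi bounded below, so non-integrability means +\<infinity>) *)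
definition phi_div :: "(real \<Rightarrow> real) \<Rightarrow> 'a measure \<Rightarrow> 'a measure \<Rightarrow> ereal" where
  "phi_div \<phi> Q P =
    (if sets Q = sets P \<and> absolutely_continuous P Q then
       (if integrable P (\<lambda>x. \<phi> (enn2real (RN_deriv P Q x)))
        then ereal (\<integral>x. \<phi> (enn2real (RN_deriv P Q x)) \<partial>P) else \<infinity>)
     else \<infinity>)"

definition couplings :: "nat \<Rightarrow> (nat \<Rightarrow> 'a measure) \<Rightarrow> (nat \<Rightarrow> 'a) measure set" where
  "couplings N \<mu> = {\<pi>. prob_space \<pi> \<and> sets \<pi> = sets (PiM {..<N} \<mu>)
       \<and> (\<forall>i<N. distr \<pi> (\<mu> i) (\<lambda>x. x i) = \<mu> i)}"

definition F_phi :: "(real \<Rightarrow> real) \<Rightarrow> ((nat \<Rightarrow> 'a) \<Rightarrow> real) \<Rightarrow> (nat \<Rightarrow> 'a) measure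
     \<Rightarrow> (nat \<Rightarrow> 'a) measure \<Rightarrow> ereal" where
  "F_phi \<phi> c P \<pi> = ereal (\<integral>x. c x \<partial>\<pi>) + phi_div \<phi> \<pi> P"

definition OT_phi :: "(real \<Rightarrow> real) \<Rightarrow> ((nat \<Rightarrow> 'a) \<Rightarrow> real) \<Rightarrow> nat \<Rightarrow> (nat \<Rightarrow> 'a measure) \<Rightarrow> ereal" where
  "OT_phi \<phi> c N \<mu> = (INF \<pi>\<in>couplings N \<mu>. F_phi \<phi> c (PiM {..<N} \<mu>) \<pi>)"

definition tv_norm_diff :: "'a measure \<Rightarrow> 'a measure \<Rightarrow> ereal" where
  "tv_norm_diff M1 M2 = (SUP F \<in> {F. finite F \<and> disjoint F \<and> F \<subseteq> sets M1
        \<and> (\<forall>A\<in>F. emeasure M1 A < \<top> \<and> emeasure M2 A < \<top>)}.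
        ereal (\<Sum>A\<in>F. \<bar>measure M1 A - measure M2 A\<bar>))"

end

theory Submission
  imports Defs
begin

text \<open>
  Write \<open>\<pi>\<^sup>* = g P\<close> and \<open>\<pi> = f P\<close>. The midpoint \<open>h P\<close>, \<open>h = (f + g) / 2\<close>, is again a
  coupling, and the cost term of \<open>F\<close> is linear in the coupling, so optimality of \<open>\<pi>\<^sup>*\<close> bounds
  the convexity gap \<open>\<integral> (\<phi>(f) + \<phi>(g)) / 2 - \<phi>(h) dP\<close> by \<open>(F(\<pi>) - F(\<pi>\<^sup>*)) / 2\<close>.
  Since \<open>\<phi>'' \<ge> 1 / (max \<lambda>\<^sub>1 \<lambda>\<^sub>2 (1 + x))\<close>, the pointwise gap dominates
  \<open>(f - g)\<^sup>2 / (8 max \<lambda>\<^sub>1 \<lambda>\<^sub>2 (1 + f + g))\<close>. Finally \<open>\<parallel>\<rho>(\<pi>\<^sup>* - \<pi>)\<parallel> \<le> \<integral> \<rho> \<bar>f - g\<bar> dP\<close>, and the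
  Cauchy--Schwarz inequality with weight \<open>1 + f + g\<close> gives the claim, because
  \<open>\<integral> \<rho>\<^sup>2 (1 + f + g) dP = \<integral> \<rho>\<^sup>2 d(P + \<pi>\<^sup>* + \<pi>)\<close>.
\<close>

lemma MVT_has_real_derivative:
  fixes f f' :: "real \<Rightarrow> real"
  assumes "a < b" and "continuous_on {a..b} f"
    and f': "\<And>x. a < x \<Longrightarrow> x < b \<Longrightarrow> (f has_real_derivative f' x) (at x)"
  shows "\<exists>z. a < z \<and> z < b \<and> f b - f a = (b - a) * f' z"
proof -
  have "f differentiable (at x)" if "a < x" "x < b" for x
    using f'[OF that] real_differentiable_def by blast
  then obtain l z where z: "a < z" "z < b" "(f has_real_derivative l) (at z)"
    "f b - f a = (b - a) * l"
    using MVT[OF assms(1,2)] by blast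
  moreover have "l = f' z"
    using z by (intro DERIV_unique[OF z(3) f']) auto
  ultimately show ?thesis by blast
qed

lemma midpoint_convexity_gap_ge:
  fixes f f' f'' :: "real \<Rightarrow> real"
  assumes "a < b" and f_cont: "continuous_on {a..b} f"
    and f': "\<And>x. a < x \<Longrightarrow> x < b \<Longrightarrow> (f has_real_derivative f' x) (at x)"
    and f'': "\<And>x. a < x \<Longrightarrow> x < b \<Longrightarrow> (f' has_real_derivative f'' x) (at x)"
    and k: "\<And>x. a < x \<Longrightarrow> x < b \<Longrightarrow> k \<le> f'' x"
  shows "k * (b - a)\<^sup>2 / 8 \<le> (f a + f b) / 2 - f ((a + b) / 2)"
proof -
  \<comment> \<open>\<open>\<psi> = f - k x\<^sup>2/2\<close> has an increasing derivative, so its mean slope over the left half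
    of \<open>[a, b]\<close> is at most that over the right half; this is the claim.\<close>
  define \<psi> where "\<psi> x = f x - k * x\<^sup>2 / 2" for x
  define \<psi>' where "\<psi>' x = f' x - k * x" for x
  define m where "m = (a + b) / 2"
  have m: "a < m" "m < b" "m - a = (b - a) / 2" "b - m = (b - a) / 2"
    using \<open>a < b\<close> unfolding m_def by (auto simp: field_simps)
  have \<psi>_deriv: "(\<psi> has_real_derivative \<psi>' x) (at x)" if "a < x" "x < b" for x
    unfolding \<psi>_def \<psi>'_def using f'[OF that] by (auto intro!: derivative_eq_intros)
  have \<psi>_cont: "continuous_on {u..v} \<psi>" if "a \<le> u" "v \<le> b" for u v
    unfolding \<psi>_def using that by (intro continuous_intros continuous_on_subset[OF f_cont]) auto
  have \<psi>'_mono: "\<psi>' u \<le> \<psi>' v" if "a < u" "u \<le> v" "v < b" for u v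
  proof (rule DERIV_nonneg_imp_increasing_open[OF \<open>u \<le> v\<close>])
    fix x assume "u < x" "x < v"
    then have x: "a < x" "x < b" using that by auto
    have "(\<psi>' has_real_derivative f'' x - k) (at x)"
      unfolding \<psi>'_def using f''[OF x] by (auto intro!: derivative_eq_intros)
    then show "\<exists>y. (\<psi>' has_real_derivative y) (at x) \<and> 0 \<le> y" using k[OF x] by auto
  next
    have "isCont \<psi>' x" if "x \<in> {u..v}" for x
      unfolding \<psi>'_def using that \<open>a < u\<close> \<open>v < b\<close>
      by (intro continuous_intros DERIV_isCont[OF f'']) auto
    then show "continuous_on {u..v} \<psi>'" by (simp add: continuous_at_imp_continuous_on)
  qed
  have "\<exists>z. a < z \<and> z < m \<and> \<psi> m - \<psi> a = (m - a) * \<psi>' z"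
    using m \<psi>_deriv by (intro MVT_has_real_derivative \<psi>_cont) auto
  then obtain z where z: "a < z" "z < m" and left: "\<psi> m - \<psi> a = (b - a) / 2 * \<psi>' z"
    using m by auto
  have "\<exists>z'. m < z' \<and> z' < b \<and> \<psi> b - \<psi> m = (b - m) * \<psi>' z'"
    using m \<psi>_deriv by (intro MVT_has_real_derivative \<psi>_cont) auto
  then obtain z' where z': "m < z'" "z' < b" and right: "\<psi> b - \<psi> m = (b - a) / 2 * \<psi>' z'"
    using m by auto
  have "(b - a) / 2 * \<psi>' z \<le> (b - a) / 2 * \<psi>' z'"
    using z z' \<psi>'_mono \<open>a < b\<close> by (intro mult_left_mono) auto
  then have "\<psi> m - \<psi> a \<le> \<psi> b - \<psi> m"
    using left right by linarith
  then show ?thesis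
    unfolding \<psi>_def m_def by (simp add: field_simps power2_eq_square)
qed

lemma lambda_convex_max_pos:
  assumes "lambda_convex l1 l2 \<phi>"
  shows "0 < max l1 l2"
proof -
  have "0 < deriv (deriv \<phi>) 1" "1 / deriv (deriv \<phi>) 1 \<le> l1 + l2"
    using assms unfolding lambda_convex_def by (auto dest: spec[where x = 1])
  then have "0 < l1 + l2"
    by (metis order.strict_trans2 zero_less_divide_1_iff)
  then show ?thesis unfolding max_def by auto
qed

lemma lambda_convex_deriv2_ge:
  assumes "lambda_convex l1 l2 \<phi>" "0 \<le> l1" "0 \<le> l2" "0 < x"
  shows "1 / (max l1 l2 * (1 + x)) \<le> deriv (deriv \<phi>) x"
proof -
  have pos: "0 < deriv (deriv \<phi>) x" and le: "1 / deriv (deriv \<phi>) x \<le> l1 + l2 * x"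
    using assms unfolding lambda_convex_def by auto
  have "l1 + l2 * x \<le> max l1 l2 * (1 + x)"
    using assms by (simp add: distrib_left add_mono mult_right_mono)
  with le have "1 / deriv (deriv \<phi>) x \<le> max l1 l2 * (1 + x)" by linarith
  from le_imp_inverse_le[OF this] show ?thesis
    using pos by (simp add: inverse_eq_divide)
qed

lemma lambda_convex_midpoint_gap:
  assumes lc: "lambda_convex l1 l2 \<phi>" and l: "0 \<le> l1" "0 \<le> l2" and "0 \<le> a" "0 \<le> b"
  shows "(a - b)\<^sup>2 / (8 * max l1 l2 * (1 + a + b)) \<le> (\<phi> a + \<phi> b) / 2 - \<phi> ((a + b) / 2)"
proof -
  define M where "M = max l1 l2"
  have "0 < M" unfolding M_def using lambda_convex_max_pos[OF lc] .
  have gap: "(a - b)\<^sup>2 / (8 * M * (1 + a + b)) \<le> (\<phi> a + \<phi> b) / 2 - \<phi> ((a + b) / 2)"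
    if "0 \<le> a" "a < b" for a b
  proof -
    define k where "k = 1 / (M * (1 + a + b))"
    have "k * (b - a)\<^sup>2 / 8 \<le> (\<phi> a + \<phi> b) / 2 - \<phi> ((a + b) / 2)"
    proof (rule midpoint_convexity_gap_ge[OF \<open>a < b\<close>])
      show "continuous_on {a..b} \<phi>"
        using lc that unfolding lambda_convex_def by (auto intro: continuous_on_subset)
      fix x assume x: "a < x" "x < b"
      then have "0 < x" using that by linarith
      then show "(\<phi> has_real_derivative deriv \<phi> x) (at x)"
        and "(deriv \<phi> has_real_derivative deriv (deriv \<phi>) x) (at x)"
        using lc unfolding lambda_convex_def by (auto simp: DERIV_deriv_iff_real_differentiable)
      have "k \<le> 1 / (M * (1 + x))"
        unfolding k_def using \<open>0 < M\<close> x that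
        by (intro divide_left_mono mult_left_mono mult_pos_pos) auto
      then show "k \<le> deriv (deriv \<phi>) x"
        using lambda_convex_deriv2_ge[OF lc l \<open>0 < x\<close>] unfolding M_def by linarith
    qed
    then show ?thesis unfolding k_def by (simp add: power2_commute mult_ac)
  qed
  consider "a < b" | "a = b" | "b < a" by linarith
  then show ?thesis
  proof cases
    case 1
    then show ?thesis using gap[OF \<open>0 \<le> a\<close>] unfolding M_def by blast
  next
    case 3
    have "(a - b)\<^sup>2 = (b - a)\<^sup>2" "1 + a + b = 1 + b + a" "\<phi> a + \<phi> b = \<phi> b + \<phi> a" "a + b = b + a"
      by (simp_all add: power2_commute)
    then show ?thesis using gap[OF \<open>0 \<le> b\<close> 3] unfolding M_def by (simp only:)
  qed simp
qed

lemma borel_measurable_borel_of: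
  assumes "continuous_map T euclideanreal f"
  shows "f \<in> borel_measurable (borel_of T)"
proof (rule borel_measurableI)
  fix U :: "real set" assume "open U"
  have "openin T {x \<in> topspace T. f x \<in> U}"
    using openin_continuous_map_preimage[OF assms] \<open>open U\<close> open_openin by blast
  then have "{x \<in> topspace T. f x \<in> U} \<in> sets (borel_of T)"
    using openin_subset unfolding borel_of_def
    by (subst sets_measure_of) (blast, intro sigma_sets.Basic CollectI)
  moreover have "space (borel_of T) = topspace T"
    unfolding borel_of_def by (rule space_measure_of_conv)
  ultimately show "f -` U \<inter> space (borel_of T) \<in> sets (borel_of T)"
    by (metis Collect_conj_eq Collect_mem_eq Int_commute vimage_def)
qed

lemma powr_sum_le:
  fixes a :: "nat \<Rightarrow> real"
  assumes "\<And>i. i < N \<Longrightarrow> 0 \<le> a i" "0 \<le> q"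
  shows "(\<Sum>i<N. a i) powr q \<le> real N powr q * (\<Sum>i<N. a i powr q)"
proof (cases "N = 0")
  case False
  have "Max (a ` {..<N}) \<in> a ` {..<N}"
    using False by (intro Max_in) auto
  then obtain k where k: "k < N" "a k = Max (a ` {..<N})"
    by (metis imageE lessThan_iff)
  then have "(\<Sum>i<N. a i) \<le> real N * a k"
    using sum_mono[of "{..<N}" a "\<lambda>_. a k"] by (simp add: Max_ge)
  then have "(\<Sum>i<N. a i) powr q \<le> (real N * a k) powr q"
    using assms by (intro powr_mono2 sum_nonneg) auto
  also have "\<dots> = real N powr q * a k powr q"
    using assms k by (simp add: powr_mult)
  also have "\<dots> \<le> real N powr q * (\<Sum>i<N. a i powr q)"
    using k by (intro mult_left_mono member_le_sum) auto
  finally show ?thesis .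
qed simp

lemma powr_le_two_powr_add:
  fixes A B C q :: real
  assumes "0 \<le> A" "0 \<le> B" "0 \<le> C" "A \<le> B + C" "0 \<le> q"
  shows "A powr q \<le> 2 powr q * (B powr q + C powr q)"
proof -
  have "A powr q \<le> (2 * max B C) powr q"
    using assms by (intro powr_mono2) auto
  also have "\<dots> = 2 powr q * max B C powr q"
    using assms by (simp add: powr_mult)
  also have "max B C powr q \<le> B powr q + C powr q"
    by (simp add: max_def)
  finally show ?thesis by simp
qed

lemma in_Pp_borel_measurable_dist:
  assumes "Metric_space S d" "in_Pp p S d \<mu>" "z \<in> S"
  shows "(\<lambda>y. d z y) \<in> borel_measurable \<mu>"
proof -
  interpret Metric_space S d by fact
  have "continuous_map mtopology euclideanreal (\<lambda>y. d z y)"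
    using continuous_map_mdist[of mtopology "metric (S, d)" "\<lambda>_. z" "\<lambda>y. y"] assms(3)
    by simp
  then show ?thesis
    using borel_measurable_borel_of assms(2) measurable_cong_sets unfolding in_Pp_def by blast
qed

lemma in_Pp_integrable_dist_powr:
  assumes ms: "Metric_space S d" and mu: "in_Pp p S d \<mu>" "p \<noteq> \<top>" and "z \<in> S"
  shows "integrable \<mu> (\<lambda>y. d z y powr enn2real p)"
proof -
  interpret Metric_space S d by fact
  define q where "q = enn2real p"
  obtain z0 where "z0 \<in> S" and z0: "integrable \<mu> (\<lambda>y. d z0 y powr q)"
    using mu unfolding in_Pp_def q_def by auto
  have "finite_measure \<mu>" "space \<mu> = S"
    using mu unfolding in_Pp_def by (auto intro: prob_space.finite_measure)
  show ?thesis
  proof (rule Bochner_Integration.integrable_bound)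
    show "integrable \<mu> (\<lambda>y. 2 powr q * (d z z0 powr q + d z0 y powr q))"
      using z0 \<open>finite_measure \<mu>\<close>
      by (intro integrable_mult_right Bochner_Integration.integrable_add finite_measure.integrable_const)
    show "(\<lambda>y. d z y powr enn2real p) \<in> borel_measurable \<mu>"
      using in_Pp_borel_measurable_dist[OF ms mu(1) \<open>z \<in> S\<close>] by measurable
    show "AE y in \<mu>. norm (d z y powr enn2real p) \<le> norm (2 powr q * (d z z0 powr q + d z0 y powr q))"
    proof (rule AE_I2)
      fix y assume "y \<in> space \<mu>"
      then have "d z y powr q \<le> 2 powr q * (d z z0 powr q + d z0 y powr q)"
        using \<open>space \<mu> = S\<close> \<open>z \<in> S\<close> \<open>z0 \<in> S\<close>
        by (intro powr_le_two_powr_add triangle) (auto simp: q_def)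
      then show "norm (d z y powr enn2real p) \<le> norm (2 powr q * (d z z0 powr q + d z0 y powr q))"
        unfolding q_def by simp
    qed
  qed
qed

lemma couplings_space:
  assumes "\<nu> \<in> couplings N \<mu>" "\<And>i. i < N \<Longrightarrow> space (\<mu> i) = S i"
  shows "space \<nu> = PiE {..<N} S"
proof -
  have "space \<nu> = space (PiM {..<N} \<mu>)"
    using assms(1) unfolding couplings_def by (intro sets_eq_imp_space_eq) auto
  also have "\<dots> = PiE {..<N} S"
    unfolding space_PiM using assms(2) by (intro PiE_cong) auto
  finally show ?thesis .
qed

lemma integrable_coupling_component:
  fixes h :: "'a \<Rightarrow> real"
  assumes nu: "\<nu> \<in> couplings N \<mu>" and "i < N" and h: "integrable (\<mu> i) h"
  shows "integrable \<nu> (\<lambda>x. h (x i))"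
proof -
  have sets: "sets \<nu> = sets (PiM {..<N} \<mu>)" and marginal: "distr \<nu> (\<mu> i) (\<lambda>x. x i) = \<mu> i"
    using nu \<open>i < N\<close> unfolding couplings_def by auto
  have "(\<lambda>x. x i) \<in> measurable \<nu> (\<mu> i)"
    using measurable_component_singleton[of i "{..<N}" \<mu>] \<open>i < N\<close>
    by (simp add: measurable_cong_sets[OF sets refl])
  then show ?thesis
    using integrable_distr_eq[of "\<lambda>x. x i" \<nu> "\<mu> i" h] h marginal by simp
qed

lemma integrable_coupling_sum_dist_powr:
  assumes polish: "\<And>i. i < N \<Longrightarrow> polish_metric (S i) (d i)"
    and mu: "\<And>i. i < N \<Longrightarrow> in_Pp p (S i) (d i) (\<mu> i)" "p \<noteq> \<top>"
    and nu: "\<nu> \<in> couplings N \<mu>" and x0: "x0 \<in> PiE {..<N} S"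
  shows "integrable \<nu> (\<lambda>x. \<Sum>i<N. d i (x0 i) (x i) powr enn2real p)"
proof (intro Bochner_Integration.integrable_sum)
  fix i assume "i \<in> {..<N}"
  then have "i < N" by simp
  have "Metric_space (S i) (d i)"
    using polish[OF \<open>i < N\<close>] unfolding polish_metric_def by auto
  from in_Pp_integrable_dist_powr[OF this mu(1)[OF \<open>i < N\<close>] mu(2)]
  show "integrable \<nu> (\<lambda>x. d i (x0 i) (x i) powr enn2real p)"
    using integrable_coupling_component[OF nu \<open>i < N\<close>] x0 \<open>i < N\<close> by auto
qed

lemma integrable_coupling_growth:
  assumes polish: "\<And>i. i < N \<Longrightarrow> polish_metric (S i) (d i)"
    and mu: "\<And>i. i < N \<Longrightarrow> in_Pp p (S i) (d i) (\<mu> i)"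
    and growth: "growth_order p N S d c"
    and c_meas: "c \<in> borel_measurable (PiM {..<N} \<mu>)"
    and nu: "\<nu> \<in> couplings N \<mu>"
  shows "integrable \<nu> c"
proof -
  interpret prob_space \<nu> using nu unfolding couplings_def by auto
  have space_nu: "space \<nu> = PiE {..<N} S"
    using couplings_space[OF nu] mu unfolding in_Pp_def by auto
  have "sets \<nu> = sets (PiM {..<N} \<mu>)"
    using nu unfolding couplings_def by auto
  then have c_meas': "c \<in> borel_measurable \<nu>"
    using c_meas measurable_cong_sets by blast
  show ?thesis
  proof (cases "p = \<top>")
    case True
    then obtain B where "\<And>x. x \<in> PiE {..<N} S \<Longrightarrow> \<bar>c x\<bar> \<le> B"
      using growth unfolding growth_order_def by auto
    then show ?thesis
      using space_nu c_meas' by (intro integrable_const_bound[where B = B]) auto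
  next
    case False
    define q where "q = enn2real p"
    obtain x0 C' where x0: "x0 \<in> PiE {..<N} S" and "C' > 0"
      and bound: "\<And>x. x \<in> PiE {..<N} S \<Longrightarrow> \<bar>c x\<bar> \<le> C' * (1 + prod_dist N d x0 x powr q)"
      using growth False unfolding growth_order_def q_def by auto
    define g where "g x = C' * (1 + real N powr q * (\<Sum>i<N. d i (x0 i) (x i) powr q))" for x
    have g_int: "integrable \<nu> g"
      unfolding g_def q_def using integrable_coupling_sum_dist_powr[OF polish mu False nu x0]
      by (intro integrable_mult_right Bochner_Integration.integrable_add integrable_const)
    have g_bound: "norm (c x) \<le> norm (g x)" if "x \<in> space \<nu>" for x
    proof -
      have "prod_dist N d x0 x powr q \<le> real N powr q * (\<Sum>i<N. d i (x0 i) (x i) powr q)"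
        unfolding prod_dist_def q_def using polish
        by (intro powr_sum_le) (auto simp: polish_metric_def intro: Metric_space.nonneg)
      then have "\<bar>c x\<bar> \<le> g x"
        unfolding g_def using bound[of x] that space_nu \<open>C' > 0\<close>
        by (smt (verit) mult_left_mono)
      then show ?thesis by simp
    qed
    show ?thesis
      by (rule Bochner_Integration.integrable_bound[OF g_int c_meas' AE_I2]) (rule g_bound)
  qed
qed

lemma measure_density_eq_integral:
  fixes w :: "'b \<Rightarrow> real"
  assumes [measurable]: "w \<in> borel_measurable P"
    and nonneg: "\<And>x. x \<in> space P \<Longrightarrow> 0 \<le> w x"
    and A: "A \<in> sets P" and finite: "emeasure (density P (\<lambda>x. ennreal (w x))) A < \<top>"
  shows "integrable P (\<lambda>x. w x * indicator A x)"
    and "measure (density P (\<lambda>x. ennreal (w x))) A = (\<integral>x. w x * indicator A x \<partial>P)"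
proof -
  have "integrable (density P (\<lambda>x. ennreal (w x))) (indicator A :: _ \<Rightarrow> real)"
    using A finite by (simp add: integrable_indicator_iff)
  then show "integrable P (\<lambda>x. w x * indicator A x)"
    using A nonneg by (subst (asm) integrable_density) auto
  have "measure (density P (\<lambda>x. ennreal (w x))) A
      = (\<integral>x. indicator A x \<partial>density P (\<lambda>x. ennreal (w x)))"
    using A by simp
  then show "measure (density P (\<lambda>x. ennreal (w x))) A = (\<integral>x. w x * indicator A x \<partial>P)"
    using A nonneg by (subst (asm) integral_density) auto
qed

lemma abs_measure_density_diff_le:
  fixes u v :: "'b \<Rightarrow> real"
  assumes [measurable]: "u \<in> borel_measurable P" "v \<in> borel_measurable P"
    and nonneg: "\<And>x. x \<in> space P \<Longrightarrow> 0 \<le> u x" "\<And>x. x \<in> space P \<Longrightarrow> 0 \<le> v x"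
    and A: "A \<in> sets P"
    and finite: "emeasure (density P (\<lambda>x. ennreal (u x))) A < \<top>"
      "emeasure (density P (\<lambda>x. ennreal (v x))) A < \<top>"
  shows "ennreal \<bar>measure (density P (\<lambda>x. ennreal (u x))) A
                  - measure (density P (\<lambda>x. ennreal (v x))) A\<bar>
    \<le> (\<integral>\<^sup>+x. ennreal \<bar>u x - v x\<bar> * indicator A x \<partial>P)"
proof -
  note u = measure_density_eq_integral[OF _ nonneg(1) A finite(1)]
    and v = measure_density_eq_integral[OF _ nonneg(2) A finite(2)]
  have "\<bar>measure (density P (\<lambda>x. ennreal (u x))) A - measure (density P (\<lambda>x. ennreal (v x))) A\<bar>
      = norm (\<integral>x. u x * indicator A x - v x * indicator A x \<partial>P)"
    using u v by simp
  also have "ennreal \<dots> \<le> (\<integral>\<^sup>+x. norm (u x * indicator A x - v x * indicator A x) \<partial>P)"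
    using u v by (intro integral_norm_bound_ennreal) auto
  also have "\<dots> = (\<integral>\<^sup>+x. ennreal \<bar>u x - v x\<bar> * indicator A x \<partial>P)"
    by (intro nn_integral_cong) (simp split: split_indicator)
  finally show ?thesis .
qed

lemma tv_norm_diff_density_le:
  fixes u v :: "'b \<Rightarrow> real"
  assumes [measurable]: "u \<in> borel_measurable P" "v \<in> borel_measurable P"
    and nonneg: "\<And>x. x \<in> space P \<Longrightarrow> 0 \<le> u x" "\<And>x. x \<in> space P \<Longrightarrow> 0 \<le> v x"
  shows "tv_norm_diff (density P (\<lambda>x. ennreal (u x))) (density P (\<lambda>x. ennreal (v x)))
    \<le> enn2ereal (\<integral>\<^sup>+x. ennreal \<bar>u x - v x\<bar> \<partial>P)"
  unfolding tv_norm_diff_def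
proof (rule SUP_least, clarify)
  fix F assume F: "finite F" "disjoint F" "F \<subseteq> sets (density P (\<lambda>x. ennreal (u x)))"
    and finite: "\<forall>A\<in>F. emeasure (density P (\<lambda>x. ennreal (u x))) A < \<top>
                      \<and> emeasure (density P (\<lambda>x. ennreal (v x))) A < \<top>"
  define \<delta> where "\<delta> A = \<bar>measure (density P (\<lambda>x. ennreal (u x))) A
                          - measure (density P (\<lambda>x. ennreal (v x))) A\<bar>" for A
  have [measurable]: "A \<in> sets P" if "A \<in> F" for A using F(3) that by auto
  have "ennreal (\<Sum>A\<in>F. \<delta> A) = (\<Sum>A\<in>F. ennreal (\<delta> A))"
    unfolding \<delta>_def by (rule sum_ennreal[symmetric]) simp
  also have "\<dots> \<le> (\<Sum>A\<in>F. \<integral>\<^sup>+x. ennreal \<bar>u x - v x\<bar> * indicator A x \<partial>P)"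
    unfolding \<delta>_def using F finite by (intro sum_mono abs_measure_density_diff_le nonneg) auto
  also have "\<dots> = (\<integral>\<^sup>+x. (\<Sum>A\<in>F. ennreal \<bar>u x - v x\<bar> * indicator A x) \<partial>P)"
    by (intro nn_integral_sum[symmetric]) measurable
  also have "\<dots> = (\<integral>\<^sup>+x. ennreal \<bar>u x - v x\<bar> * indicator (\<Union>F) x \<partial>P)"
  proof (intro nn_integral_cong)
    fix x
    have "disjoint_family_on id F"
      using F(2) unfolding disjoint_family_on_def disjoint_def by auto
    then have "indicator (\<Union>F) x = (\<Sum>A\<in>F. indicator A x :: ennreal)"
      using indicator_UN_disjoint[OF F(1), of id x] by simp
    then show "(\<Sum>A\<in>F. ennreal \<bar>u x - v x\<bar> * indicator A x)
        = ennreal \<bar>u x - v x\<bar> * indicator (\<Union>F) x"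
      by (simp add: sum_distrib_left)
  qed
  also have "\<dots> \<le> (\<integral>\<^sup>+x. ennreal \<bar>u x - v x\<bar> \<partial>P)"
    by (intro nn_integral_mono) (simp split: split_indicator)
  finally have "ennreal (\<Sum>A\<in>F. \<delta> A) \<le> (\<integral>\<^sup>+x. ennreal \<bar>u x - v x\<bar> \<partial>P)" .
  moreover have "0 \<le> (\<Sum>A\<in>F. \<delta> A)"
    unfolding \<delta>_def by (simp add: sum_nonneg)
  ultimately have "ereal (\<Sum>A\<in>F. \<delta> A) \<le> enn2ereal (\<integral>\<^sup>+x. ennreal \<bar>u x - v x\<bar> \<partial>P)"
    by (metis enn2ereal_ennreal less_eq_ennreal.rep_eq)
  then show "ereal (\<Sum>A\<in>F. \<bar>measure (density P (\<lambda>x. ennreal (u x))) A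
                             - measure (density P (\<lambda>x. ennreal (v x))) A\<bar>)
      \<le> enn2ereal (\<integral>\<^sup>+x. ennreal \<bar>u x - v x\<bar> \<partial>P)"
    unfolding \<delta>_def .
qed

lemma tv_norm_diff_nonneg: "0 \<le> tv_norm_diff M1 M2"
  unfolding tv_norm_diff_def by (rule SUP_upper2[where i = "{}"]) auto

lemma tv_norm_diff_density_eq_0:
  fixes \<rho> :: "'b \<Rightarrow> real"
  assumes [measurable]: "\<rho> \<in> borel_measurable M1" "\<rho> \<in> borel_measurable M2"
    and "(\<integral>\<^sup>+x. ennreal (\<bar>\<rho> x\<bar>\<^sup>2) \<partial>M1) = 0" "(\<integral>\<^sup>+x. ennreal (\<bar>\<rho> x\<bar>\<^sup>2) \<partial>M2) = 0"
  shows "tv_norm_diff (density M1 (\<lambda>x. ennreal (\<rho> x))) (density M2 (\<lambda>x. ennreal (\<rho> x))) = 0"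
proof -
  have "AE x in M1. \<rho> x = 0" "AE x in M2. \<rho> x = 0"
    using assms(3,4) by (simp_all add: nn_integral_0_iff_AE)
  then have "density M1 (\<lambda>x. ennreal (\<rho> x)) = density M1 (\<lambda>_. 0)"
    "density M2 (\<lambda>x. ennreal (\<rho> x)) = density M2 (\<lambda>_. 0)"
    by (auto intro: density_cong)
  moreover have "measure (density M (\<lambda>_. 0)) A = 0" for M :: "'b measure" and A
    by (cases "A \<in> sets M") (auto simp: measure_def emeasure_density emeasure_notin_sets)
  ultimately have "tv_norm_diff (density M1 (\<lambda>x. ennreal (\<rho> x))) (density M2 (\<lambda>x. ennreal (\<rho> x)))
      \<le> 0"
    unfolding tv_norm_diff_def by (intro SUP_least) simp
  then show ?thesis using tv_norm_diff_nonneg order.antisym by blast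
qed

lemma phi_div_finite_density:
  assumes "sigma_finite_measure P" "finite_measure \<nu>" "phi_div \<phi> \<nu> P \<noteq> \<infinity>"
  obtains f where "f \<in> borel_measurable P" "\<And>x. 0 \<le> f x"
    "\<nu> = density P (\<lambda>x. ennreal (f x))" "integrable P (\<lambda>x. \<phi> (f x))"
proof -
  interpret sigma_finite_measure P by fact
  have sets: "sets \<nu> = sets P" and ac: "absolutely_continuous P \<nu>"
    and int: "integrable P (\<lambda>x. \<phi> (enn2real (RN_deriv P \<nu> x)))"
    using assms(3) unfolding phi_div_def by (auto split: if_splits)
  define f where "f x = enn2real (RN_deriv P \<nu> x)" for x
  have "AE x in P. RN_deriv P \<nu> x \<noteq> \<infinity>"
    using finite_measure.sigma_finite_measure[OF assms(2)] ac sets by (rule RN_deriv_finite)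
  then have "density P (RN_deriv P \<nu>) = density P (\<lambda>x. ennreal (f x))"
    unfolding f_def by (intro density_cong) (auto simp: less_top)
  then have "\<nu> = density P (\<lambda>x. ennreal (f x))"
    using density_RN_deriv[OF ac sets] by simp
  moreover have "f \<in> borel_measurable P" unfolding f_def by measurable
  moreover have "0 \<le> f x" for x unfolding f_def by simp
  ultimately show ?thesis
    using that int unfolding f_def by blast
qed

lemma borel_measurable_continuous_on_nonneg_comp:
  fixes u :: "'b \<Rightarrow> real"
  assumes "continuous_on {0..} \<phi>" "u \<in> borel_measurable M" "\<And>x. x \<in> space M \<Longrightarrow> 0 \<le> u x"
  shows "(\<lambda>x. \<phi> (u x)) \<in> borel_measurable M"
proof -
  have "continuous_on UNIV (\<lambda>y. \<phi> (max 0 y))"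
    by (rule continuous_on_compose2[OF assms(1)]) (auto intro!: continuous_intros)
  then have "(\<lambda>x. \<phi> (max 0 (u x))) \<in> borel_measurable M"
    using assms(2) by (rule borel_measurable_continuous_on)
  then show ?thesis
    by (rule measurable_cong[THEN iffD1, rotated]) (simp add: assms(3) max_absorb2)
qed

lemma phi_div_density:
  assumes "sigma_finite_measure P" and cont: "continuous_on {0..} \<phi>"
    and [measurable]: "h \<in> borel_measurable P" and nonneg: "\<And>x. 0 \<le> h x"
    and int: "integrable P (\<lambda>x. \<phi> (h x))"
  shows "phi_div \<phi> (density P (\<lambda>x. ennreal (h x))) P = ereal (\<integral>x. \<phi> (h x) \<partial>P)"
proof -
  interpret sigma_finite_measure P by fact
  let ?D = "RN_deriv P (density P (\<lambda>x. ennreal (h x)))"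
  have "AE x in P. ennreal (h x) = ?D x"
    by (rule RN_deriv_unique) auto
  then have ae: "AE x in P. \<phi> (enn2real (?D x)) = \<phi> (h x)"
    by eventually_elim (metis enn2real_ennreal nonneg)
  have [measurable]: "(\<lambda>x. \<phi> (enn2real (?D x))) \<in> borel_measurable P"
    "(\<lambda>x. \<phi> (h x)) \<in> borel_measurable P"
    using nonneg by (auto intro!: borel_measurable_continuous_on_nonneg_comp[OF cont])
  have "integrable P (\<lambda>x. \<phi> (enn2real (?D x)))"
    using integrable_cong_AE[OF _ _ ae] int by simp
  moreover have "(\<integral>x. \<phi> (enn2real (?D x)) \<partial>P) = (\<integral>x. \<phi> (h x) \<partial>P)"
    using ae by (intro integral_cong_AE) auto
  moreover have "absolutely_continuous P (density P (\<lambda>x. ennreal (h x)))"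
    by (rule absolutely_continuousI_density) simp
  ultimately show ?thesis unfolding phi_div_def by simp
qed

lemma ennreal_add_self_divide_2: "(x + x) / 2 = (x :: ennreal)"
  using mult_divide_eq_ennreal[of 2 x] by (simp add: mult_2_right)

lemma emeasure_density_midpoint:
  fixes f g :: "'b \<Rightarrow> real"
  assumes [measurable]: "f \<in> borel_measurable P" "g \<in> borel_measurable P" "A \<in> sets P"
    and nonneg: "\<And>x. 0 \<le> f x" "\<And>x. 0 \<le> g x"
  shows "emeasure (density P (\<lambda>x. ennreal ((f x + g x) / 2))) A
    = (emeasure (density P (\<lambda>x. ennreal (f x))) A + emeasure (density P (\<lambda>x. ennreal (g x))) A) / 2"
proof -
  have "emeasure (density P (\<lambda>x. ennreal ((f x + g x) / 2))) A
      = (\<integral>\<^sup>+x. (ennreal (f x) * indicator A x + ennreal (g x) * indicator A x) / 2 \<partial>P)"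
    using nonneg by (auto simp: emeasure_density ennreal_plus divide_ennreal[symmetric]
        intro!: nn_integral_cong split: split_indicator)
  then show ?thesis
    by (simp add: nn_integral_divide nn_integral_add emeasure_density)
qed

lemma couplings_density_midpoint:
  fixes N :: nat and \<mu> :: "nat \<Rightarrow> 'a measure"
  defines "P \<equiv> PiM {..<N} \<mu>"
  assumes meas[measurable]: "f \<in> borel_measurable P" "g \<in> borel_measurable P"
    and nonneg: "\<And>x. 0 \<le> f x" "\<And>x. 0 \<le> g x"
    and couplings: "density P (\<lambda>x. ennreal (f x)) \<in> couplings N \<mu>"
      "density P (\<lambda>x. ennreal (g x)) \<in> couplings N \<mu>"
  shows "density P (\<lambda>x. ennreal ((f x + g x) / 2)) \<in> couplings N \<mu>"
proof -
  let ?f = "density P (\<lambda>x. ennreal (f x))" and ?g = "density P (\<lambda>x. ennreal (g x))"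
    and ?h = "density P (\<lambda>x. ennreal ((f x + g x) / 2))"
  note emeasure_h = emeasure_density_midpoint[OF meas _ nonneg]
  have "prob_space ?f" "prob_space ?g"
    using couplings unfolding couplings_def by auto
  then have "emeasure ?f (space P) = 1" "emeasure ?g (space P) = 1"
    using prob_space.emeasure_space_1 by fastforce+
  then have "prob_space ?h"
    using emeasure_h[of "space P"] by (intro prob_spaceI) (simp add: ennreal_add_self_divide_2)
  moreover have "distr ?h (\<mu> i) (\<lambda>x. x i) = \<mu> i" if "i < N" for i
  proof (rule measure_eqI)
    fix A assume "A \<in> sets (distr ?h (\<mu> i) (\<lambda>x. x i))"
    then have A: "A \<in> sets (\<mu> i)" by simp
    have component: "(\<lambda>x. x i) \<in> measurable P (\<mu> i)"
      unfolding P_def using \<open>i < N\<close> by (intro measurable_component_singleton) simp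
    then have preimage: "(\<lambda>x. x i) -` A \<inter> space P \<in> sets P"
      using A by (rule measurable_sets)
    have "emeasure (distr ?f (\<mu> i) (\<lambda>x. x i)) A = emeasure (\<mu> i) A"
      "emeasure (distr ?g (\<mu> i) (\<lambda>x. x i)) A = emeasure (\<mu> i) A"
      using couplings \<open>i < N\<close> unfolding couplings_def by auto
    then show "emeasure (distr ?h (\<mu> i) (\<lambda>x. x i)) A = emeasure (\<mu> i) A"
      using component A
      by (simp add: emeasure_distr emeasure_h[OF preimage] ennreal_add_self_divide_2)
  qed simp
  ultimately show ?thesis unfolding couplings_def P_def by simp
qed

lemma integral_density_midpoint:
  fixes c f g :: "'b \<Rightarrow> real"
  assumes [measurable]: "f \<in> borel_measurable P" "g \<in> borel_measurable P"
    and nonneg: "\<And>x. 0 \<le> f x" "\<And>x. 0 \<le> g x"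
    and int: "integrable (density P (\<lambda>x. ennreal (f x))) c"
      "integrable (density P (\<lambda>x. ennreal (g x))) c"
  shows "(\<integral>x. c x \<partial>density P (\<lambda>x. ennreal ((f x + g x) / 2)))
    = ((\<integral>x. c x \<partial>density P (\<lambda>x. ennreal (f x))) + (\<integral>x. c x \<partial>density P (\<lambda>x. ennreal (g x)))) / 2"
proof -
  have [measurable]: "c \<in> borel_measurable P"
    using borel_measurable_integrable[OF int(1)] by simp
  have "integrable P (\<lambda>x. f x * c x)" "integrable P (\<lambda>x. g x * c x)"
    using int nonneg by (simp_all add: integrable_density)
  moreover have "(\<lambda>x. (f x + g x) / 2 * c x) = (\<lambda>x. (f x * c x + g x * c x) / 2)"
    by (simp add: fun_eq_iff field_simps)
  ultimately show ?thesis
    using nonneg by (simp add: integral_density add_nonneg_nonneg)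
qed

lemma couplings_integral_midpoint:
  fixes N :: nat and \<mu> :: "nat \<Rightarrow> 'a measure" and c :: "(nat \<Rightarrow> 'a) \<Rightarrow> real"
  defines "P \<equiv> PiM {..<N} \<mu>"
  assumes polish: "\<And>i. i < N \<Longrightarrow> polish_metric (S i) (d i)"
    and mu: "\<And>i. i < N \<Longrightarrow> in_Pp p (S i) (d i) (\<mu> i)"
    and growth: "growth_order p N S d c"
    and [measurable]: "f \<in> borel_measurable P" "g \<in> borel_measurable P"
    and nonneg: "\<And>x. 0 \<le> f x" "\<And>x. 0 \<le> g x"
    and couplings: "density P (\<lambda>x. ennreal (f x)) \<in> couplings N \<mu>"
      "density P (\<lambda>x. ennreal (g x)) \<in> couplings N \<mu>"
  shows "(\<integral>x. c x \<partial>density P (\<lambda>x. ennreal ((f x + g x) / 2)))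
    = ((\<integral>x. c x \<partial>density P (\<lambda>x. ennreal (f x))) + (\<integral>x. c x \<partial>density P (\<lambda>x. ennreal (g x)))) / 2"
proof (cases "c \<in> borel_measurable P")
  case True
  have "integrable \<nu> c" if "\<nu> \<in> couplings N \<mu>" for \<nu>
    using polish mu growth True[unfolded P_def] that by (rule integrable_coupling_growth)
  then show ?thesis
    using couplings by (intro integral_density_midpoint nonneg) auto
next
  case False
  \<comment> \<open>Then \<open>c\<close> is integrable w.r.t. no measure on these sets, and all three integrals are \<open>0\<close>.\<close>
  then have "(\<integral>x. c x \<partial>density P w) = 0" for w
    by (metis borel_measurable_integrable measurable_density_eq1 not_integrable_integral_eq)
  then show ?thesis by simp
qed

lemma integrable_phi_midpoint:
  fixes f g :: "'b \<Rightarrow> real"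
  assumes "finite_measure P" and phi: "admissible_phi \<phi>" and cont: "continuous_on {0..} \<phi>"
    and [measurable]: "f \<in> borel_measurable P" "g \<in> borel_measurable P"
    and nonneg: "\<And>x. 0 \<le> f x" "\<And>x. 0 \<le> g x"
    and int: "integrable P (\<lambda>x. \<phi> (f x))" "integrable P (\<lambda>x. \<phi> (g x))"
  shows "integrable P (\<lambda>x. \<phi> ((f x + g x) / 2))"
proof -
  obtain b where b: "\<And>x. 0 \<le> x \<Longrightarrow> b \<le> \<phi> x"
    using phi unfolding admissible_phi_def by auto
  have convex: "\<phi> ((1 - t) * s + t * u) < (1 - t) * \<phi> s + t * \<phi> u"
    if "0 \<le> s" "0 \<le> u" "s \<noteq> u" "0 < t" "t < 1" for s u t
    using phi that unfolding admissible_phi_def by blast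
  have midpoint: "\<phi> ((s + u) / 2) \<le> (\<phi> s + \<phi> u) / 2" if "0 \<le> s" "0 \<le> u" for s u
    using convex[OF that, of "1/2"] by (cases "s = u") (auto simp: field_simps)
  show ?thesis
  proof (rule Bochner_Integration.integrable_bound)
    show "integrable P (\<lambda>x. \<bar>b\<bar> + \<bar>\<phi> (f x)\<bar> + \<bar>\<phi> (g x)\<bar>)"
      using int by (intro Bochner_Integration.integrable_add integrable_abs
          finite_measure.integrable_const[OF \<open>finite_measure P\<close>])
    show "(\<lambda>x. \<phi> ((f x + g x) / 2)) \<in> borel_measurable P"
      using nonneg by (intro borel_measurable_continuous_on_nonneg_comp[OF cont]) auto
    show "AE x in P. norm (\<phi> ((f x + g x) / 2)) \<le> norm (\<bar>b\<bar> + \<bar>\<phi> (f x)\<bar> + \<bar>\<phi> (g x)\<bar>)"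
    proof (rule AE_I2)
      fix x
      have "b \<le> \<phi> ((f x + g x) / 2)" "\<phi> ((f x + g x) / 2) \<le> (\<phi> (f x) + \<phi> (g x)) / 2"
        using b midpoint nonneg by simp_all
      then show "norm (\<phi> ((f x + g x) / 2)) \<le> norm (\<bar>b\<bar> + \<bar>\<phi> (f x)\<bar> + \<bar>\<phi> (g x)\<bar>)"
        by simp
    qed
  qed
qed

lemma nn_integral_midpoint_gap_le:
  fixes f g :: "'b \<Rightarrow> real"
  assumes lam: "lambda_convex l1 l2 \<phi>" "0 \<le> l1" "0 \<le> l2"
    and [measurable]: "f \<in> borel_measurable P" "g \<in> borel_measurable P"
    and nonneg: "\<And>x. 0 \<le> f x" "\<And>x. 0 \<le> g x"
    and int: "integrable P (\<lambda>x. \<phi> (f x))" "integrable P (\<lambda>x. \<phi> (g x))"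
      "integrable P (\<lambda>x. \<phi> ((f x + g x) / 2))"
  shows "(\<integral>\<^sup>+x. ennreal ((f x - g x)\<^sup>2 / (1 + f x + g x)) \<partial>P)
    \<le> ennreal (8 * max l1 l2 * (((\<integral>x. \<phi> (f x) \<partial>P) + (\<integral>x. \<phi> (g x) \<partial>P)) / 2
                                 - (\<integral>x. \<phi> ((f x + g x) / 2) \<partial>P)))"
proof -
  define M where "M = max l1 l2"
  define gap where "gap x = (\<phi> (f x) + \<phi> (g x)) / 2 - \<phi> ((f x + g x) / 2)" for x
  have "0 < M" unfolding M_def by (rule lambda_convex_max_pos[OF lam(1)])
  have gap_ge: "(f x - g x)\<^sup>2 / (1 + f x + g x) \<le> 8 * M * gap x" for x
  proof -
    have "(f x - g x)\<^sup>2 / (1 + f x + g x) = 8 * M * ((f x - g x)\<^sup>2 / (8 * M * (1 + f x + g x)))"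
      using \<open>0 < M\<close> by simp
    also have "\<dots> \<le> 8 * M * gap x"
      unfolding gap_def M_def using \<open>0 < M\<close> lambda_convex_midpoint_gap[OF lam nonneg]
      by (intro mult_left_mono) (auto simp: M_def)
    finally show ?thesis .
  qed
  have "(\<integral>\<^sup>+x. ennreal ((f x - g x)\<^sup>2 / (1 + f x + g x)) \<partial>P) \<le> (\<integral>\<^sup>+x. ennreal (8 * M * gap x) \<partial>P)"
    using gap_ge by (intro nn_integral_mono ennreal_leI)
  also have "\<dots> = ennreal (\<integral>x. 8 * M * gap x \<partial>P)"
  proof (rule nn_integral_eq_integral)
    show "integrable P (\<lambda>x. 8 * M * gap x)" unfolding gap_def using int by simp
    have "0 \<le> (f x - g x)\<^sup>2 / (1 + f x + g x)" for x using nonneg[of x] by simp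
    then show "AE x in P. 0 \<le> 8 * M * gap x" using gap_ge order.trans by blast
  qed
  also have "(\<integral>x. 8 * M * gap x \<partial>P)
      = 8 * M * (((\<integral>x. \<phi> (f x) \<partial>P) + (\<integral>x. \<phi> (g x) \<partial>P)) / 2 - (\<integral>x. \<phi> ((f x + g x) / 2) \<partial>P))"
    unfolding gap_def using int by simp
  finally show ?thesis unfolding M_def .
qed

lemma prob_space_PiM_in_Pp:
  assumes "\<And>i. i < N \<Longrightarrow> in_Pp p (S i) (d i) (\<mu> i)"
  shows "prob_space (PiM {..<N} \<mu>)"
  using assms unfolding in_Pp_def by (intro prob_space_PiM) auto

lemma F_phi_density:
  assumes "sigma_finite_measure P" "continuous_on {0..} \<phi>"
    and "w \<in> borel_measurable P" "\<And>x. 0 \<le> w x" "integrable P (\<lambda>x. \<phi> (w x))"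
  shows "F_phi \<phi> c P (density P (\<lambda>x. ennreal (w x)))
    = ereal ((\<integral>x. c x \<partial>density P (\<lambda>x. ennreal (w x))) + (\<integral>x. \<phi> (w x) \<partial>P))"
  using phi_div_density[OF assms] unfolding F_phi_def by simp

lemma enn2ereal_le_ereal_mult_diff:
  assumes "x \<le> ennreal (C * (a - b))" "0 \<le> C" "b \<le> a"
  shows "enn2ereal x \<le> ereal C * (ereal a - ereal b)"
proof -
  have "enn2ereal x \<le> enn2ereal (ennreal (C * (a - b)))"
    using assms(1) by (simp only: less_eq_ennreal.rep_eq)
  then show ?thesis using assms(2,3) by simp
qed

lemma optimal_coupling_density_gap:
  fixes N :: nat and \<mu> :: "nat \<Rightarrow> 'a measure" and c f g :: "(nat \<Rightarrow> 'a) \<Rightarrow> real"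
  defines "P \<equiv> PiM {..<N} \<mu>"
  assumes polish: "\<And>i. i < N \<Longrightarrow> polish_metric (S i) (d i)"
    and mu: "\<And>i. i < N \<Longrightarrow> in_Pp p (S i) (d i) (\<mu> i)"
    and growth: "growth_order p N S d c"
    and phi: "admissible_phi \<phi>" and lam: "0 \<le> l1" "0 \<le> l2" "lambda_convex l1 l2 \<phi>"
    and meas[measurable]: "f \<in> borel_measurable P" "g \<in> borel_measurable P"
    and nonneg: "\<And>x. 0 \<le> f x" "\<And>x. 0 \<le> g x"
    and int: "integrable P (\<lambda>x. \<phi> (f x))" "integrable P (\<lambda>x. \<phi> (g x))"
    and couplings: "density P (\<lambda>x. ennreal (f x)) \<in> couplings N \<mu>"
      "density P (\<lambda>x. ennreal (g x)) \<in> couplings N \<mu>"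
    and optimal: "\<And>\<nu>. \<nu> \<in> couplings N \<mu> \<Longrightarrow>
      F_phi \<phi> c P (density P (\<lambda>x. ennreal (g x))) \<le> F_phi \<phi> c P \<nu>"
  shows "enn2ereal (\<integral>\<^sup>+x. ennreal ((f x - g x)\<^sup>2 / (1 + f x + g x)) \<partial>P)
    \<le> ereal (4 * max l1 l2)
       * (F_phi \<phi> c P (density P (\<lambda>x. ennreal (f x)))
          - F_phi \<phi> c P (density P (\<lambda>x. ennreal (g x))))"
proof -
  have "prob_space P" unfolding P_def using mu by (rule prob_space_PiM_in_Pp)
  have cont: "continuous_on {0..} \<phi>" using lam(3) unfolding lambda_convex_def by simp
  let ?C = "\<lambda>w. \<integral>x. c x \<partial>density P (\<lambda>x. ennreal (w x))" and ?D = "\<lambda>w. \<integral>x. \<phi> (w x) \<partial>P"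
  note F_eq = F_phi_density[OF prob_space_imp_sigma_finite[OF \<open>prob_space P\<close>] cont]
  define h where "h x = (f x + g x) / 2" for x
  have [measurable]: "h \<in> borel_measurable P" unfolding h_def by measurable
  have h_nonneg: "0 \<le> h x" for x unfolding h_def using nonneg[of x] by simp
  have int_h: "integrable P (\<lambda>x. \<phi> (h x))"
    unfolding h_def using prob_space.finite_measure[OF \<open>prob_space P\<close>] phi cont meas nonneg int
    by (rule integrable_phi_midpoint)
  have "density P (\<lambda>x. ennreal (h x)) \<in> couplings N \<mu>"
    unfolding h_def using meas nonneg couplings
    by (rule couplings_density_midpoint[where N = N and \<mu> = \<mu>, folded P_def])
  then have "ereal (?C g + ?D g) \<le> ereal (?C h + ?D h)"
    using optimal F_eq[of g] F_eq[of h] h_nonneg int int_h nonneg by fastforce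
  moreover have "?C h = (?C f + ?C g) / 2"
    unfolding h_def using polish mu growth meas nonneg couplings
    by (rule couplings_integral_midpoint[where N = N and \<mu> = \<mu>, folded P_def])
  ultimately have optimal_h: "(?D f + ?D g) / 2 - ?D h \<le> ((?C f + ?D f) - (?C g + ?D g)) / 2"
    by (simp add: field_simps)
  have "ereal (?C g + ?D g) \<le> ereal (?C f + ?D f)"
    using optimal[OF couplings(1)] F_eq[of g] F_eq[of f] int nonneg by fastforce
  then have gain_nonneg: "?C g + ?D g \<le> ?C f + ?D f" by simp
  have "(\<integral>\<^sup>+x. ennreal ((f x - g x)\<^sup>2 / (1 + f x + g x)) \<partial>P)
      \<le> ennreal (8 * max l1 l2 * ((?D f + ?D g) / 2 - ?D h))"
    unfolding h_def using lam(3,1,2) meas nonneg int int_h[unfolded h_def]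
    by (rule nn_integral_midpoint_gap_le)
  also have "\<dots> \<le> ennreal (4 * max l1 l2 * ((?C f + ?D f) - (?C g + ?D g)))"
    using mult_left_mono[OF optimal_h, of "8 * max l1 l2"] lambda_convex_max_pos[OF lam(3)]
    by (intro ennreal_leI) simp
  finally have "enn2ereal (\<integral>\<^sup>+x. ennreal ((f x - g x)\<^sup>2 / (1 + f x + g x)) \<partial>P)
      \<le> ereal (4 * max l1 l2) * (ereal (?C f + ?D f) - ereal (?C g + ?D g))"
    using gain_nonneg lambda_convex_max_pos[OF lam(3)] by (intro enn2ereal_le_ereal_mult_diff) auto
  then show ?thesis
    using F_eq[of f] F_eq[of g] int nonneg by simp
qed

lemma density_density_ennreal:
  fixes u \<rho> :: "'b \<Rightarrow> real"
  assumes [measurable]: "u \<in> borel_measurable P" "\<rho> \<in> borel_measurable P"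
    and "\<And>x. x \<in> space P \<Longrightarrow> 0 \<le> u x" "\<And>x. x \<in> space P \<Longrightarrow> 0 \<le> \<rho> x"
  shows "density (density P (\<lambda>x. ennreal (u x))) (\<lambda>x. ennreal (\<rho> x))
    = density P (\<lambda>x. ennreal (u x * \<rho> x))"
  using assms(3,4)
  by (subst density_density_eq) (auto intro!: density_cong AE_I2 simp: ennreal_mult')

lemma Cauchy_Schwarz_nn_integral_weighted:
  fixes a b w :: "'b \<Rightarrow> real"
  assumes [measurable]: "a \<in> borel_measurable M" "b \<in> borel_measurable M" "w \<in> borel_measurable M"
    and nonneg: "\<And>x. x \<in> space M \<Longrightarrow> 0 \<le> a x" "\<And>x. x \<in> space M \<Longrightarrow> 0 \<le> b x"
    and pos: "\<And>x. x \<in> space M \<Longrightarrow> 0 < w x"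
  shows "(\<integral>\<^sup>+x. ennreal (a x * b x) \<partial>M)\<^sup>2
    \<le> (\<integral>\<^sup>+x. ennreal ((a x)\<^sup>2 * w x) \<partial>M) * (\<integral>\<^sup>+x. ennreal ((b x)\<^sup>2 / w x) \<partial>M)"
proof -
  have "(\<integral>\<^sup>+x. ennreal (a x * b x) \<partial>M)
      = (\<integral>\<^sup>+x. ennreal (a x * sqrt (w x)) * ennreal (b x / sqrt (w x)) \<partial>M)"
  proof (rule nn_integral_cong)
    fix x assume x: "x \<in> space M"
    have factor: "a x * b x = a x * sqrt (w x) * (b x / sqrt (w x))"
      using pos[OF x] by simp
    show "ennreal (a x * b x) = ennreal (a x * sqrt (w x)) * ennreal (b x / sqrt (w x))"
      unfolding factor using nonneg[OF x] pos[OF x] by (intro ennreal_mult) auto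
  qed
  also have "\<dots>\<^sup>2 \<le> (\<integral>\<^sup>+x. ennreal (a x * sqrt (w x)) ^ 2 \<partial>M)
                   * (\<integral>\<^sup>+x. ennreal (b x / sqrt (w x)) ^ 2 \<partial>M)"
    by (intro Cauchy_Schwarz_nn_integral) measurable
  also have "\<dots> = (\<integral>\<^sup>+x. ennreal ((a x)\<^sup>2 * w x) \<partial>M) * (\<integral>\<^sup>+x. ennreal ((b x)\<^sup>2 / w x) \<partial>M)"
    using nonneg pos
    by (intro arg_cong2[where f = "(*)"] nn_integral_cong)
       (simp_all add: ennreal_power power_mult_distrib power_divide less_imp_le)
  finally show ?thesis .
qed

lemma nn_integral_sq_weight_density:
  fixes f g \<rho> :: "'b \<Rightarrow> real"
  assumes [measurable]: "f \<in> borel_measurable P" "g \<in> borel_measurable P" "\<rho> \<in> borel_measurable P"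
    and nonneg: "\<And>x. 0 \<le> f x" "\<And>x. 0 \<le> g x"
  shows "(\<integral>\<^sup>+x. ennreal ((\<rho> x)\<^sup>2 * (1 + f x + g x)) \<partial>P)
    = (\<integral>\<^sup>+x. ennreal (\<bar>\<rho> x\<bar>\<^sup>2) \<partial>P)
      + (\<integral>\<^sup>+x. ennreal (\<bar>\<rho> x\<bar>\<^sup>2) \<partial>density P (\<lambda>x. ennreal (g x)))
      + (\<integral>\<^sup>+x. ennreal (\<bar>\<rho> x\<bar>\<^sup>2) \<partial>density P (\<lambda>x. ennreal (f x)))"
proof -
  have "ennreal ((\<rho> x)\<^sup>2 * (1 + f x + g x))
      = ennreal (\<bar>\<rho> x\<bar>\<^sup>2) + ennreal (g x) * ennreal (\<bar>\<rho> x\<bar>\<^sup>2) + ennreal (f x) * ennreal (\<bar>\<rho> x\<bar>\<^sup>2)"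
    for x
  proof -
    have "(\<rho> x)\<^sup>2 * (1 + f x + g x) = \<bar>\<rho> x\<bar>\<^sup>2 + g x * \<bar>\<rho> x\<bar>\<^sup>2 + f x * \<bar>\<rho> x\<bar>\<^sup>2"
      by (simp add: algebra_simps)
    then show ?thesis
      using nonneg[of x] by (simp add: ennreal_plus ennreal_mult del: ennreal_plus_if)
  qed
  then show ?thesis
    by (simp add: nn_integral_add nn_integral_density)
qed

lemma tv_norm_diff_density_sq_le:
  fixes f g \<rho> :: "'b \<Rightarrow> real"
  assumes meas[measurable]: "f \<in> borel_measurable P" "g \<in> borel_measurable P" "\<rho> \<in> borel_measurable P"
    and nonneg: "\<And>x. 0 \<le> f x" "\<And>x. 0 \<le> g x" "\<And>x. x \<in> space P \<Longrightarrow> 0 \<le> \<rho> x"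
  shows "(tv_norm_diff (density (density P (\<lambda>x. ennreal (g x))) (\<lambda>x. ennreal (\<rho> x)))
                       (density (density P (\<lambda>x. ennreal (f x))) (\<lambda>x. ennreal (\<rho> x))))\<^sup>2
    \<le> enn2ereal ((\<integral>\<^sup>+x. ennreal (\<bar>\<rho> x\<bar>\<^sup>2) \<partial>P)
                 + (\<integral>\<^sup>+x. ennreal (\<bar>\<rho> x\<bar>\<^sup>2) \<partial>density P (\<lambda>x. ennreal (g x)))
                 + (\<integral>\<^sup>+x. ennreal (\<bar>\<rho> x\<bar>\<^sup>2) \<partial>density P (\<lambda>x. ennreal (f x))))
      * enn2ereal (\<integral>\<^sup>+x. ennreal ((f x - g x)\<^sup>2 / (1 + f x + g x)) \<partial>P)"
    (is "?TV\<^sup>2 \<le> _")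
proof -
  define J where "J = (\<integral>\<^sup>+x. ennreal (\<rho> x * \<bar>f x - g x\<bar>) \<partial>P)"
  have density_density: "density (density P (\<lambda>x. ennreal (u x))) (\<lambda>x. ennreal (\<rho> x))
      = density P (\<lambda>x. ennreal (u x * \<rho> x))"
    if "u \<in> borel_measurable P" "\<And>x. 0 \<le> u x" for u
    using that meas(3) nonneg(3) by (intro density_density_ennreal) auto
  have "?TV \<le> enn2ereal (\<integral>\<^sup>+x. ennreal \<bar>g x * \<rho> x - f x * \<rho> x\<bar> \<partial>P)"
    unfolding density_density[OF meas(1) nonneg(1)] density_density[OF meas(2) nonneg(2)]
    using nonneg by (intro tv_norm_diff_density_le) auto
  also have "(\<integral>\<^sup>+x. ennreal \<bar>g x * \<rho> x - f x * \<rho> x\<bar> \<partial>P) = J"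
    unfolding J_def using nonneg(3)
    by (intro nn_integral_cong) (simp add: abs_mult left_diff_distrib[symmetric] abs_minus_commute)
  finally have "?TV\<^sup>2 \<le> (enn2ereal J)\<^sup>2"
    unfolding power2_eq_square using tv_norm_diff_nonneg by (intro ereal_mult_mono') auto
  also have "\<dots> = enn2ereal (J\<^sup>2)"
    by (simp add: power2_eq_square times_ennreal.rep_eq)
  also have "\<dots> \<le> enn2ereal ((\<integral>\<^sup>+x. ennreal ((\<rho> x)\<^sup>2 * (1 + f x + g x)) \<partial>P)
                            * (\<integral>\<^sup>+x. ennreal (\<bar>f x - g x\<bar>\<^sup>2 / (1 + f x + g x)) \<partial>P))"
  proof -
    have "0 < 1 + f x + g x" for x using nonneg(1,2)[of x] by linarith
    then show ?thesis
      unfolding less_eq_ennreal.rep_eq[symmetric] J_def using nonneg(3)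
      by (intro Cauchy_Schwarz_nn_integral_weighted) auto
  qed
  finally show ?thesis
    unfolding nn_integral_sq_weight_density[OF meas nonneg(1,2)] by (simp add: times_ennreal.rep_eq)
qed

lemma ereal_sq_le_mult_cases:
  fixes t D :: ereal and I :: ennreal
  assumes "0 < C" and zero: "I = 0 \<Longrightarrow> t = 0"
    and finite: "D \<noteq> \<infinity> \<Longrightarrow> t\<^sup>2 \<le> ereal C * enn2ereal I * D"
  shows "t\<^sup>2 \<le> ereal C * enn2ereal I * D"
proof (cases "D = \<infinity>")
  case True
  show ?thesis
  proof (cases "I = 0")
    case True
    then show ?thesis using zero by (simp add: zero_ennreal.rep_eq power2_eq_square)
  next
    case False
    then have "0 < enn2ereal I" "enn2ereal I \<noteq> 0"
      by (metis enn2ereal_inject enn2ereal_nonneg order_le_less zero_ennreal.rep_eq)+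
    then show ?thesis using \<open>D = \<infinity>\<close> \<open>0 < C\<close> by (simp add: ereal_zero_less_0_iff)
  qed
qed (rule finite)

theorem lemma3p3:
  fixes N :: nat
    and S :: "nat \<Rightarrow> 'a set" and d :: "nat \<Rightarrow> 'a \<Rightarrow> 'a \<Rightarrow> real"
    and p :: ennreal
    and \<mu> :: "nat \<Rightarrow> 'a measure"
    and c :: "(nat \<Rightarrow> 'a) \<Rightarrow> real"
    and \<phi> :: "real \<Rightarrow> real" and l1 l2 :: real
    and \<pi>star \<pi> :: "(nat \<Rightarrow> 'a) measure"
    and \<rho> :: "(nat \<Rightarrow> 'a) \<Rightarrow> real"
  assumes polish: "\<And>i. i < N \<Longrightarrow> polish_metric (S i) (d i)"
    and p_ge: "1 \<le> p"
    and mu: "\<And>i. i < N \<Longrightarrow> in_Pp p (S i) (d i) (\<mu> i)"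
    and c_cont: "continuous_map
        (product_topology (\<lambda>i. Metric_space.mtopology (S i) (d i)) {..<N}) euclideanreal c"
    and c_growth: "growth_order p N S d c"
    and phi: "admissible_phi \<phi>"
    and lam: "l1 \<ge> 0" "l2 \<ge> 0" "lambda_convex l1 l2 \<phi>"
    and opt: "\<pi>star \<in> couplings N \<mu>"
      "F_phi \<phi> c (PiM {..<N} \<mu>) \<pi>star = OT_phi \<phi> c N \<mu>"
    and pi: "\<pi> \<in> couplings N \<mu>"
    and rho_meas: "\<rho> \<in> borel_measurable (PiM {..<N} \<mu>)"
    and rho_nonneg: "\<And>x. x \<in> space (PiM {..<N} \<mu>) \<Longrightarrow> 0 \<le> \<rho> x"
  shows "(tv_norm_diff (density \<pi>star (\<lambda>x. ennreal (\<rho> x))) (density \<pi> (\<lambda>x. ennreal (\<rho> x)))) ^ 2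
     \<le> ereal (4 * max l1 l2)
        * enn2ereal ((\<integral>\<^sup>+x. ennreal (\<bar>\<rho> x\<bar> ^ 2) \<partial>(PiM {..<N} \<mu>))
                   + (\<integral>\<^sup>+x. ennreal (\<bar>\<rho> x\<bar> ^ 2) \<partial>\<pi>star)
                   + (\<integral>\<^sup>+x. ennreal (\<bar>\<rho> x\<bar> ^ 2) \<partial>\<pi>))
        * (F_phi \<phi> c (PiM {..<N} \<mu>) \<pi> - F_phi \<phi> c (PiM {..<N} \<mu>) \<pi>star)"
proof -
  let ?P = "PiM {..<N} \<mu>"
  let ?TV = "tv_norm_diff (density \<pi>star (\<lambda>x. ennreal (\<rho> x))) (density \<pi> (\<lambda>x. ennreal (\<rho> x)))"
  let ?I = "(\<integral>\<^sup>+x. ennreal (\<bar>\<rho> x\<bar>\<^sup>2) \<partial>?P) + (\<integral>\<^sup>+x. ennreal (\<bar>\<rho> x\<bar>\<^sup>2) \<partial>\<pi>star)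
    + (\<integral>\<^sup>+x. ennreal (\<bar>\<rho> x\<bar>\<^sup>2) \<partial>\<pi>)"
  have "prob_space ?P" using mu by (rule prob_space_PiM_in_Pp)
  have optimal: "F_phi \<phi> c ?P \<pi>star \<le> F_phi \<phi> c ?P \<nu>" if "\<nu> \<in> couplings N \<mu>" for \<nu>
    using opt(2) that unfolding OT_phi_def by (metis INF_lower)
  have couplings: "prob_space \<pi>star" "sets \<pi>star = sets ?P" "prob_space \<pi>" "sets \<pi> = sets ?P"
    using opt(1) pi unfolding couplings_def by auto
  then have [measurable]: "\<rho> \<in> borel_measurable \<pi>star" "\<rho> \<in> borel_measurable \<pi>"
    using rho_meas measurable_cong_sets by blast+
  show ?thesis
  proof (rule ereal_sq_le_mult_cases)
    show "0 < 4 * max l1 l2" using lambda_convex_max_pos[OF lam(3)] by simp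
    show "?TV = 0" if "?I = 0"
      using that tv_norm_diff_density_eq_0[of \<rho> \<pi>star \<pi>] by simp
    assume "F_phi \<phi> c ?P \<pi> - F_phi \<phi> c ?P \<pi>star \<noteq> \<infinity>"
    then have "phi_div \<phi> \<pi> ?P \<noteq> \<infinity>" "phi_div \<phi> \<pi>star ?P \<noteq> \<infinity>"
      using optimal[OF pi] unfolding F_phi_def by auto
    then obtain f g where f: "f \<in> borel_measurable ?P" "\<And>x. 0 \<le> f x"
        "\<pi> = density ?P (\<lambda>x. ennreal (f x))" "integrable ?P (\<lambda>x. \<phi> (f x))"
      and g: "g \<in> borel_measurable ?P" "\<And>x. 0 \<le> g x"
        "\<pi>star = density ?P (\<lambda>x. ennreal (g x))" "integrable ?P (\<lambda>x. \<phi> (g x))"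
      using phi_div_finite_density[OF prob_space_imp_sigma_finite[OF \<open>prob_space ?P\<close>]
          prob_space.finite_measure] couplings(1,3) by metis
    have "?TV\<^sup>2 \<le> enn2ereal ?I * enn2ereal (\<integral>\<^sup>+x. ennreal ((f x - g x)\<^sup>2 / (1 + f x + g x)) \<partial>?P)"
      unfolding f(3) g(3) using f(1,2) g(1,2) rho_meas rho_nonneg
      by (intro tv_norm_diff_density_sq_le) auto
    also have "\<dots> \<le> enn2ereal ?I * (ereal (4 * max l1 l2) * (F_phi \<phi> c ?P \<pi> - F_phi \<phi> c ?P \<pi>star))"
      using optimal_coupling_density_gap[OF polish mu c_growth phi lam f(1) g(1) f(2) g(2) f(4) g(4)]
        opt(1) pi optimal
      unfolding f(3) g(3) by (intro ereal_mult_left_mono) auto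
    finally show "?TV\<^sup>2 \<le> ereal (4 * max l1 l2) * enn2ereal ?I * (F_phi \<phi> c ?P \<pi> - F_phi \<phi> c ?P \<pi>star)"
      by (simp add: mult_ac)
  qed
qed

end
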